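(* Let $n,d\ge1$, $p>d$, $\Delta\in\mathbb{R}^{nd\times nd}$ symmetric with $d\times d$ blocks, $\Delta_{ii}=0$, $Z^{\top}=[I_d,\dots,I_d]$, $A=ZZ^{\top}+\Delta$, $f(S)=\langle A,SS^{\top}\rangle$. Every second-order critical point $S$ of $f$ satisfies \[ (p-d)\|Z^{\top}S\|_F^2\ge(p-2d)n^2d+\|SS^{\top}\|_F^2\,d+\sum_{i=1}^n\sum_{j=1}^n\big(\|S_iS_j^{\top}\|_F^2-d\big)\mathrm{Tr}(\Delta_{ij})+(p-d)\langle\Delta,ZZ^{\top}-SS^{\top}\rangle. \]
   Context: $S\in\mathbb{R}^{nd\times p}$ has $d\times p$ blocks $S_i$ with $S_iS_i^{\top}=I_d$; $A_{ij}=I_d+\Delta_{ij}$; $\langle X,Y\rangle=\mathrm{Tr}(XY^{\top})$. $\Lambda_{ii}=\frac12\sum_j(S_iS_j^{\top}A_{ji}+A_{ij}S_jS_i^{\top})$; $T_{S_i}=\{Y\in\mathbb{R}^{d\times p}:S_iY^{\top}+YS_i^{\top}=0\}$. $S$ is a second-order critical point if $\sum_jA_{ij}S_j=\Lambda_{ii}S_i$ for all $i$ and $\sum_i\langle\Lambda_{ii},\dot S_i\dot S_i^{\top}\rangle\ge\sum_{i,j}\langle A_{ij},\dot S_i\dot S_j^{\top}\rangle$ for all $\dot S_i\in T_{S_i}$. *)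

theory Defs
  imports "Jordan_Normal_Form.Matrix"
begin

definition mtrace :: "real mat \<Rightarrow> real" where
  "mtrace X = (\<Sum>k<dim_row X. X $$ (k, k))"

definition finner :: "real mat \<Rightarrow> real mat \<Rightarrow> real" where
  "finner X Y = mtrace (X * Y\<^sup>T)"

definition fnorm2 :: "real mat \<Rightarrow> real" where
  "fnorm2 X = finner X X"

definition rblock :: "nat \<Rightarrow> real mat \<Rightarrow> nat \<Rightarrow> real mat" where
  "rblock d S i = mat d (dim_col S) (\<lambda>(r, c). S $$ (i * d + r, c))"

definition dblock :: "nat \<Rightarrow> real mat \<Rightarrow> nat \<Rightarrow> nat \<Rightarrow> real mat" where
  "dblock d M i j = mat d d (\<lambda>(r, c). M $$ (i * d + r, j * d + c))"

text \<open>Z with Z^T = [I_d, ..., I_d]  (n blocks), an (n d) x d matrix.\<close>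
definition Zmat :: "nat \<Rightarrow> nat \<Rightarrow> real mat" where
  "Zmat n d = mat (n * d) d (\<lambda>(r, c). if r mod d = c then 1 else 0)"

definition msum :: "nat \<Rightarrow> nat \<Rightarrow> ('i \<Rightarrow> real mat) \<Rightarrow> 'i set \<Rightarrow> real mat" where
  "msum r c F J = mat r c (\<lambda>(a, b). \<Sum>j\<in>J. F j $$ (a, b))"

text \<open>Blocks of A = Z Z^T + Delta:  A_ij = I_d + Delta_ij.\<close>
definition Ablk :: "nat \<Rightarrow> real mat \<Rightarrow> nat \<Rightarrow> nat \<Rightarrow> real mat" where
  "Ablk d \<Delta> i j = 1\<^sub>m d + dblock d \<Delta> i j"

definition Lam :: "nat \<Rightarrow> nat \<Rightarrow> real mat \<Rightarrow> real mat \<Rightarrow> nat \<Rightarrow> real mat" where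
  "Lam n d \<Delta> S i = (1/2 :: real) \<cdot>\<^sub>m msum d d (\<lambda>j.
      rblock d S i * (rblock d S j)\<^sup>T * Ablk d \<Delta> j i
    + Ablk d \<Delta> i j * rblock d S j * (rblock d S i)\<^sup>T) {..<n}"

definition tangent :: "nat \<Rightarrow> nat \<Rightarrow> real mat \<Rightarrow> real mat set" where
  "tangent d p Si = {Y \<in> carrier_mat d p. Si * Y\<^sup>T + Y * Si\<^sup>T = 0\<^sub>m d d}"

text \<open>Second-order critical point of f(S) = <A, S S^T> over the product of Stiefel manifolds.\<close>
definition second_order_critical :: "nat \<Rightarrow> nat \<Rightarrow> nat \<Rightarrow> real mat \<Rightarrow> real mat \<Rightarrow> bool" where
  "second_order_critical n d p \<Delta> S \<longleftrightarrow>
     (\<forall>i<n. msum d p (\<lambda>j. Ablk d \<Delta> i j * rblock d S j) {..<n}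
              = Lam n d \<Delta> S i * rblock d S i) \<and>
     (\<forall>Sd :: nat \<Rightarrow> real mat. (\<forall>i<n. Sd i \<in> tangent d p (rblock d S i)) \<longrightarrow>
        (\<Sum>i<n. finner (Lam n d \<Delta> S i) (Sd i * (Sd i)\<^sup>T))
          \<ge> (\<Sum>i<n. \<Sum>j<n. finner (Ablk d \<Delta> i j) (Sd i * (Sd j)\<^sup>T)))"

end

(*
  Test the second-order condition in the directions Sd_i = e_k e_l^T P_i, where
  P_i = I_p - S_i^T S_i is the orthogonal projection onto the kernel of S_i; these are
  tangent because S_i P_i = 0.  Summing the resulting inequalities over all k < d and
  l < p turns the diagonal entries of Lambda_ii and A_ij into traces and the test
  directions into <P_i, P_j> = p - 2d + ||S_i S_j^T||^2, so that
    (p - d) sum_i Tr Lambda_ii >= sum_ij Tr(A_ij) (p - 2d + ||S_i S_j^T||^2).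
  For symmetric Delta, Tr Lambda_ii = sum_j <A_ij, S_i S_j^T>, and
  sum_ij Tr(S_i S_j^T) = ||Z^T S||^2; expanding both sides blockwise gives the claim.
*)

theory Submission
  imports Defs
begin

lemma sum_lessThan_mult_split:
  fixes f :: "nat \<Rightarrow> 'a::comm_monoid_add"
  shows "(\<Sum>a<n * d. f a) = (\<Sum>i<n. \<Sum>r<d. f (i * d + r))"
proof -
  have "sum f {i * d..<i * d + d} = (\<Sum>r<d. f (i * d + r))" for i
    using sum.shift_bounds_nat_ivl[of f 0 "i * d" d]
    by (simp add: atLeast0LessThan add.commute)
  then show ?thesis by (simp flip: sum.nat_group)
qed

lemma sum_swap_outer:
  "(\<Sum>k\<in>K. \<Sum>l\<in>L. \<Sum>i\<in>I. f i k l) = (\<Sum>i\<in>I. \<Sum>k\<in>K. \<Sum>l\<in>L. f i k l)"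
proof -
  have "(\<Sum>k\<in>K. \<Sum>l\<in>L. \<Sum>i\<in>I. f i k l) = (\<Sum>k\<in>K. \<Sum>i\<in>I. \<Sum>l\<in>L. f i k l)"
    by (rule sum.cong[OF refl], rule sum.swap)
  also have "\<dots> = (\<Sum>i\<in>I. \<Sum>k\<in>K. \<Sum>l\<in>L. f i k l)"
    by (rule sum.swap)
  finally show ?thesis .
qed

lemma block_index_less: "i < n \<Longrightarrow> r < d \<Longrightarrow> i * d + r < n * (d::nat)"
  using mult_le_mono1[of "Suc i" n d] by simp

lemma mult_transpose_carrier:
  "A \<in> carrier_mat m k \<Longrightarrow> B \<in> carrier_mat n k \<Longrightarrow> A * B\<^sup>T \<in> carrier_mat m n"
  by (meson mult_carrier_mat transpose_carrier_mat)

lemma mtrace_eq_sum: "A \<in> carrier_mat m m \<Longrightarrow> mtrace A = (\<Sum>k<m. A $$ (k, k))"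
  unfolding mtrace_def by simp

lemma finner_eq_sum:
  assumes "X \<in> carrier_mat m k" "Y \<in> carrier_mat m k"
  shows "finner X Y = (\<Sum>r<m. \<Sum>c<k. X $$ (r, c) * Y $$ (r, c))"
  using assms unfolding finner_def mtrace_def
  by (auto simp: scalar_prod_def lessThan_atLeast0 intro!: sum.cong)

lemma finner_comm:
  "X \<in> carrier_mat m k \<Longrightarrow> Y \<in> carrier_mat m k \<Longrightarrow> finner X Y = finner Y X"
  by (simp add: finner_eq_sum mult.commute)

lemma finner_add_left:
  assumes "X \<in> carrier_mat m k" "Y \<in> carrier_mat m k" "Z \<in> carrier_mat m k"
  shows "finner (X + Y) Z = finner X Z + finner Y Z"
  using assms by (simp add: finner_eq_sum[of _ m k] distrib_right sum.distrib)

lemma finner_minus_right: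
  assumes "X \<in> carrier_mat m k" "Y \<in> carrier_mat m k" "Z \<in> carrier_mat m k"
  shows "finner X (Y - Z) = finner X Y - finner X Z"
  using assms minus_carrier_mat[OF assms(3), of Y]
  by (simp add: finner_eq_sum[of _ m k] right_diff_distrib sum_subtractf)

lemma finner_minus_left:
  assumes "X \<in> carrier_mat m k" "Y \<in> carrier_mat m k" "Z \<in> carrier_mat m k"
  shows "finner (X - Y) Z = finner X Z - finner Y Z"
  using assms minus_carrier_mat[OF assms(2), of X]
  by (simp add: finner_eq_sum[of _ m k] left_diff_distrib sum_subtractf)

lemma finner_one_left: "X \<in> carrier_mat m m \<Longrightarrow> finner (1\<^sub>m m) X = mtrace X"
  by (simp add: finner_def mtrace_def)

lemma mtrace_one: "mtrace (1\<^sub>m m) = real m"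
  by (simp add: mtrace_def)

lemma mtrace_mult_comm:
  assumes "A \<in> carrier_mat m k" "B \<in> carrier_mat k m"
  shows "mtrace (A * B) = mtrace (B * A)"
proof -
  have "mtrace (A * B) = (\<Sum>i<m. \<Sum>j<k. A $$ (i, j) * B $$ (j, i))"
    using assms by (simp add: mtrace_def scalar_prod_def lessThan_atLeast0)
  also have "\<dots> = (\<Sum>j<k. \<Sum>i<m. B $$ (j, i) * A $$ (i, j))"
    by (subst sum.swap) (simp add: mult.commute)
  also have "\<dots> = mtrace (B * A)"
    using assms by (simp add: mtrace_def scalar_prod_def lessThan_atLeast0)
  finally show ?thesis .
qed

lemma finner_gram:
  assumes "A \<in> carrier_mat m k" "B \<in> carrier_mat m l"
  shows "finner (A * A\<^sup>T) (B * B\<^sup>T) = fnorm2 (A\<^sup>T * B)"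
proof -
  have "finner (A * A\<^sup>T) (B * B\<^sup>T) = mtrace (A * (A\<^sup>T * B * B\<^sup>T))"
    using assms
    by (simp add: finner_def transpose_mult[of B m l] assoc_mult_mat[of A m k _ m _ m])
  also have "\<dots> = mtrace (A\<^sup>T * B * B\<^sup>T * A)"
    using assms by (intro mtrace_mult_comm) auto
  also have "A\<^sup>T * B * B\<^sup>T * A = (A\<^sup>T * B) * (A\<^sup>T * B)\<^sup>T"
  proof -
    have "(A\<^sup>T * B)\<^sup>T = B\<^sup>T * A"
      using assms by (simp add: transpose_mult[of "A\<^sup>T" k m B l])
    then show ?thesis
      using assms by (simp only:) (rule assoc_mult_mat, auto)
  qed
  finally show ?thesis by (simp add: fnorm2_def finner_def)
qed

definition ker_proj :: "real mat \<Rightarrow> real mat" where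
  "ker_proj X = 1\<^sub>m (dim_col X) - X\<^sup>T * X"

lemma ker_proj_carrier: "X \<in> carrier_mat d p \<Longrightarrow> ker_proj X \<in> carrier_mat p p"
  unfolding ker_proj_def by auto

lemma ker_proj_transpose: "X \<in> carrier_mat d p \<Longrightarrow> (ker_proj X)\<^sup>T = ker_proj X"
  unfolding ker_proj_def by (simp add: transpose_minus[of _ p p] transpose_mult[of _ p d])

lemma mult_ker_proj:
  assumes X: "X \<in> carrier_mat d p" and orth: "X * X\<^sup>T = 1\<^sub>m d"
  shows "X * ker_proj X = 0\<^sub>m d p"
proof -
  have "X * ker_proj X = X - X * X\<^sup>T * X"
    using X unfolding ker_proj_def
    by (simp add: mult_minus_distrib_mat[of X d p _ p] assoc_mult_mat[of X d p _ d X p])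
  then show ?thesis
    using X by (simp add: orth)
qed

lemma mtrace_orthonormal_gram:
  assumes "X \<in> carrier_mat d p" "X * X\<^sup>T = 1\<^sub>m d"
  shows "mtrace (X\<^sup>T * X) = real d"
  using assms mtrace_mult_comm[of "X\<^sup>T" p d X] by (simp add: mtrace_one)

lemma finner_ker_proj:
  assumes X: "X \<in> carrier_mat d p" "X * X\<^sup>T = 1\<^sub>m d"
    and Y: "Y \<in> carrier_mat d p" "Y * Y\<^sup>T = 1\<^sub>m d"
  shows "finner (ker_proj X) (ker_proj Y) = real p - 2 * real d + fnorm2 (X * Y\<^sup>T)"
proof -
  have XX: "X\<^sup>T * X \<in> carrier_mat p p" and YY: "Y\<^sup>T * Y \<in> carrier_mat p p"
    using X Y by auto
  have "finner (ker_proj X) (ker_proj Y)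
      = finner (1\<^sub>m p) (1\<^sub>m p) - finner (1\<^sub>m p) (Y\<^sup>T * Y)
        - finner (X\<^sup>T * X) (1\<^sub>m p) + finner (X\<^sup>T * X) (Y\<^sup>T * Y)"
    using X Y XX YY unfolding ker_proj_def
    by (simp add: finner_minus_left[of _ p p] finner_minus_right[of _ p p] minus_carrier_mat)
  also have "finner (X\<^sup>T * X) (1\<^sub>m p) = real d"
    using XX X by (simp add: finner_comm[of _ p p] finner_one_left mtrace_orthonormal_gram)
  also have "finner (X\<^sup>T * X) (Y\<^sup>T * Y) = fnorm2 (X * Y\<^sup>T)"
    using finner_gram[of "X\<^sup>T" p d "Y\<^sup>T" d] X Y by simp
  finally show ?thesis
    using Y YY by (simp add: finner_one_left mtrace_one mtrace_orthonormal_gram)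
qed

definition single_row_mat :: "nat \<Rightarrow> nat \<Rightarrow> real vec \<Rightarrow> real mat" where
  "single_row_mat d k v = mat d (dim_vec v) (\<lambda>(r, c). if r = k then v $ c else 0)"

lemma single_row_mat_carrier: "v \<in> carrier_vec p \<Longrightarrow> single_row_mat d k v \<in> carrier_mat d p"
  unfolding single_row_mat_def by simp

lemma mult_single_row_mat_transpose:
  assumes "X \<in> carrier_mat m p" "v \<in> carrier_vec p"
  shows "X * (single_row_mat d k v)\<^sup>T = mat m d (\<lambda>(r, r'). if r' = k then (X *\<^sub>v v) $ r else 0)"
  using assms unfolding single_row_mat_def
  by (auto simp: scalar_prod_def intro!: eq_matI sum.cong)

lemma single_row_mat_tangent:
  assumes X: "X \<in> carrier_mat d p" and v: "v \<in> carrier_vec p" and "X *\<^sub>v v = 0\<^sub>v d"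
  shows "single_row_mat d k v \<in> tangent d p X"
proof -
  have Y: "single_row_mat d k v \<in> carrier_mat d p"
    using v by (rule single_row_mat_carrier)
  have "X * (single_row_mat d k v)\<^sup>T = 0\<^sub>m d d"
    using assms by (auto simp: mult_single_row_mat_transpose)
  moreover have "single_row_mat d k v * X\<^sup>T = (X * (single_row_mat d k v)\<^sup>T)\<^sup>T"
    using X Y by (simp add: transpose_mult[of X d p])
  ultimately show ?thesis
    using Y unfolding tangent_def by simp
qed

lemma finner_single_row_mat:
  assumes "X \<in> carrier_mat d d" "k < d" and v: "v \<in> carrier_vec p" and w: "w \<in> carrier_vec p"
  shows "finner X (single_row_mat d k v * (single_row_mat d k w)\<^sup>T) = X $$ (k, k) * (v \<bullet> w)"
proof -
  have "single_row_mat d k v * (single_row_mat d k w)\<^sup>T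
      = mat d d (\<lambda>(r, r'). if r' = k then if r = k then v \<bullet> w else 0 else 0)"
    using v w unfolding single_row_mat_def
    by (auto simp: scalar_prod_def intro!: eq_matI sum.cong)
  then show ?thesis
    using assms
    by (simp add: finner_eq_sum[of _ d d] if_distrib[of "(*) _"] sum.delta cong: if_cong)
qed

lemma rblock_carrier: "S \<in> carrier_mat m p \<Longrightarrow> rblock d S i \<in> carrier_mat d p"
  unfolding rblock_def by simp

lemma dblock_carrier: "dblock d M i j \<in> carrier_mat d d"
  unfolding dblock_def by simp

lemma Ablk_carrier: "Ablk d M i j \<in> carrier_mat d d"
  unfolding Ablk_def dblock_def by simp

lemma Lam_carrier: "Lam n d \<Delta> S i \<in> carrier_mat d d"
  unfolding Lam_def msum_def by simp

lemma sum_row_scalar_prod: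
  assumes "P \<in> carrier_mat m p" "Q \<in> carrier_mat m p"
  shows "(\<Sum>l<m. row P l \<bullet> row Q l) = finner P Q"
  using assms by (simp add: finner_eq_sum scalar_prod_def lessThan_atLeast0)

lemma sum_diag_times_row_scalar_prod:
  assumes "X \<in> carrier_mat d d" "P \<in> carrier_mat m p" "Q \<in> carrier_mat m p"
  shows "(\<Sum>k<d. \<Sum>l<m. X $$ (k, k) * (row P l \<bullet> row Q l)) = mtrace X * finner P Q"
  using assms by (simp add: mtrace_eq_sum sum_product flip: sum_row_scalar_prod)

lemma ker_proj_row_tangent:
  assumes X: "X \<in> carrier_mat d p" "X * X\<^sup>T = 1\<^sub>m d" and "l < p"
  shows "single_row_mat d k (row (ker_proj X) l) \<in> tangent d p X"
proof (rule single_row_mat_tangent[OF X(1)])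
  have P: "ker_proj X \<in> carrier_mat p p"
    using X(1) by (rule ker_proj_carrier)
  then show "row (ker_proj X) l \<in> carrier_vec p"
    using \<open>l < p\<close> by simp
  have "X *\<^sub>v row (ker_proj X) l = X *\<^sub>v col (ker_proj X) l"
    using row_transpose[of l "ker_proj X"] P ker_proj_transpose[OF X(1)] \<open>l < p\<close> by simp
  also have "\<dots> = col (X * ker_proj X) l"
    using col_mult2[OF X(1) P \<open>l < p\<close>] by simp
  also have "\<dots> = 0\<^sub>v d"
    using mult_ker_proj[OF X] \<open>l < p\<close> by auto
  finally show "X *\<^sub>v row (ker_proj X) l = 0\<^sub>v d" .
qed

lemma second_order_critical_row_test:
  assumes S: "S \<in> carrier_mat (n * d) p"
    and orth: "\<forall>i<n. rblock d S i * (rblock d S i)\<^sup>T = 1\<^sub>m d"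
    and crit: "second_order_critical n d p \<Delta> S"
    and "k < d" "l < p"
  defines "r i \<equiv> row (ker_proj (rblock d S i)) l"
  shows "(\<Sum>i<n. \<Sum>j<n. Ablk d \<Delta> i j $$ (k, k) * (r i \<bullet> r j))
    \<le> (\<Sum>i<n. Lam n d \<Delta> S i $$ (k, k) * (r i \<bullet> r i))"
proof -
  define Sd where "Sd i = single_row_mat d k (r i)" for i
  have r: "r i \<in> carrier_vec p" for i
    unfolding r_def using ker_proj_carrier[OF rblock_carrier[OF S]]
    by (metis carrier_matD(2) row_carrier)
  have "Sd i \<in> tangent d p (rblock d S i)" if "i < n" for i
    unfolding Sd_def r_def using rblock_carrier[OF S] orth that \<open>l < p\<close>
    by (simp add: ker_proj_row_tangent)
  then have "(\<Sum>i<n. \<Sum>j<n. finner (Ablk d \<Delta> i j) (Sd i * (Sd j)\<^sup>T))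
      \<le> (\<Sum>i<n. finner (Lam n d \<Delta> S i) (Sd i * (Sd i)\<^sup>T))"
    using crit unfolding second_order_critical_def by blast
  then show ?thesis
    unfolding Sd_def finner_single_row_mat[OF Lam_carrier \<open>k < d\<close> r r]
      finner_single_row_mat[OF Ablk_carrier \<open>k < d\<close> r r] .
qed

lemma second_order_trace_inequality:
  assumes S: "S \<in> carrier_mat (n * d) p"
    and orth: "\<forall>i<n. rblock d S i * (rblock d S i)\<^sup>T = 1\<^sub>m d"
    and crit: "second_order_critical n d p \<Delta> S"
  defines "P i \<equiv> ker_proj (rblock d S i)"
  shows "(\<Sum>i<n. \<Sum>j<n. mtrace (Ablk d \<Delta> i j) * finner (P i) (P j))
    \<le> (\<Sum>i<n. mtrace (Lam n d \<Delta> S i) * finner (P i) (P i))"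
proof -
  have P: "P i \<in> carrier_mat p p" for i
    unfolding P_def using rblock_carrier[OF S] by (rule ker_proj_carrier)
  have "(\<Sum>i<n. \<Sum>j<n. mtrace (Ablk d \<Delta> i j) * finner (P i) (P j))
      = (\<Sum>i<n. \<Sum>j<n. \<Sum>k<d. \<Sum>l<p. Ablk d \<Delta> i j $$ (k, k) * (row (P i) l \<bullet> row (P j) l))"
    by (simp add: sum_diag_times_row_scalar_prod[OF Ablk_carrier P P])
  also have "\<dots> = (\<Sum>i<n. \<Sum>k<d. \<Sum>l<p. \<Sum>j<n. Ablk d \<Delta> i j $$ (k, k) * (row (P i) l \<bullet> row (P j) l))"
    by (rule sum.cong[OF refl], rule sum_swap_outer[symmetric])
  also have "\<dots> = (\<Sum>k<d. \<Sum>l<p. \<Sum>i<n. \<Sum>j<n. Ablk d \<Delta> i j $$ (k, k) * (row (P i) l \<bullet> row (P j) l))"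
    by (rule sum_swap_outer[symmetric])
  also have "\<dots> \<le> (\<Sum>k<d. \<Sum>l<p. \<Sum>i<n. Lam n d \<Delta> S i $$ (k, k) * (row (P i) l \<bullet> row (P i) l))"
    unfolding P_def using second_order_critical_row_test[OF S orth crit]
    by (intro sum_mono[OF sum_mono]) auto
  also have "\<dots> = (\<Sum>i<n. \<Sum>k<d. \<Sum>l<p. Lam n d \<Delta> S i $$ (k, k) * (row (P i) l \<bullet> row (P i) l))"
    by (rule sum_swap_outer)
  also have "\<dots> = (\<Sum>i<n. mtrace (Lam n d \<Delta> S i) * finner (P i) (P i))"
    by (simp add: sum_diag_times_row_scalar_prod[OF Lam_carrier P P])
  finally show ?thesis .
qed

lemma finner_dblock_sum:
  assumes "X \<in> carrier_mat (n * d) (n * d)" "Y \<in> carrier_mat (n * d) (n * d)"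
  shows "finner X Y = (\<Sum>i<n. \<Sum>j<n. finner (dblock d X i j) (dblock d Y i j))"
proof -
  have "finner X Y = (\<Sum>i<n. \<Sum>r<d. \<Sum>j<n. \<Sum>r'<d.
      X $$ (i * d + r, j * d + r') * Y $$ (i * d + r, j * d + r'))"
    using assms by (simp add: finner_eq_sum sum_lessThan_mult_split)
  also have "\<dots> = (\<Sum>i<n. \<Sum>j<n. \<Sum>r<d. \<Sum>r'<d.
      X $$ (i * d + r, j * d + r') * Y $$ (i * d + r, j * d + r'))"
    by (rule sum.cong[OF refl], rule sum.swap)
  also have "\<dots> = (\<Sum>i<n. \<Sum>j<n. finner (dblock d X i j) (dblock d Y i j))"
    unfolding finner_eq_sum[OF dblock_carrier dblock_carrier]
    by (intro sum.cong refl) (simp add: dblock_def)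
  finally show ?thesis .
qed

lemma dblock_mult_transpose:
  assumes "A \<in> carrier_mat (n * d) k" "B \<in> carrier_mat (n * d) k" "i < n" "j < n"
  shows "dblock d (A * B\<^sup>T) i j = rblock d A i * (rblock d B j)\<^sup>T"
  using assms block_index_less[of i n _ d] block_index_less[of j n _ d]
  by (auto simp: dblock_def rblock_def scalar_prod_def intro!: eq_matI sum.cong)

lemma dblock_minus:
  assumes "X \<in> carrier_mat (n * d) (n * d)" "Y \<in> carrier_mat (n * d) (n * d)" "i < n" "j < n"
  shows "dblock d (X - Y) i j = dblock d X i j - dblock d Y i j"
  using assms block_index_less[of i n _ d] block_index_less[of j n _ d]
  by (auto simp: dblock_def intro!: eq_matI)

lemma rblock_Zmat: "i < n \<Longrightarrow> rblock d (Zmat n d) i = 1\<^sub>m d"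
  using block_index_less[of i n _ d] by (auto simp: rblock_def Zmat_def intro!: eq_matI)

lemma Ablk_transpose:
  assumes "\<Delta> \<in> carrier_mat (n * d) (n * d)" "\<Delta>\<^sup>T = \<Delta>" "i < n" "j < n"
  shows "(Ablk d \<Delta> j i)\<^sup>T = Ablk d \<Delta> i j"
proof -
  have "(dblock d \<Delta> j i)\<^sup>T = dblock d \<Delta> i j"
    using assms block_index_less[of i n _ d] block_index_less[of j n _ d]
    by (auto simp: dblock_def intro!: eq_matI) (metis index_transpose_mat(1) carrier_matD)
  then show ?thesis
    unfolding Ablk_def by (simp add: transpose_add[of _ d d] dblock_carrier)
qed

lemma mtrace_add:
  assumes "X \<in> carrier_mat m m" "Y \<in> carrier_mat m m"
  shows "mtrace (X + Y) = mtrace X + mtrace Y"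
proof -
  have "mtrace (X + Y) = (\<Sum>k<m. X $$ (k, k) + Y $$ (k, k))"
    using assms by (auto simp: mtrace_def intro: sum.cong)
  then show ?thesis
    using assms by (simp add: sum.distrib mtrace_eq_sum)
qed

lemma mtrace_smult: "X \<in> carrier_mat m m \<Longrightarrow> mtrace (c \<cdot>\<^sub>m X) = c * mtrace X"
  by (auto simp: mtrace_def sum_distrib_left intro: sum.cong)

lemma mtrace_msum:
  assumes "\<And>j. j \<in> J \<Longrightarrow> F j \<in> carrier_mat m m"
  shows "mtrace (msum m m F J) = (\<Sum>j\<in>J. mtrace (F j))"
proof -
  have "mtrace (msum m m F J) = (\<Sum>k<m. \<Sum>j\<in>J. F j $$ (k, k))"
    by (simp add: mtrace_def msum_def)
  also have "\<dots> = (\<Sum>j\<in>J. \<Sum>k<m. F j $$ (k, k))"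
    by (rule sum.swap)
  also have "\<dots> = (\<Sum>j\<in>J. mtrace (F j))"
    by (rule sum.cong[OF refl]) (simp add: mtrace_eq_sum[OF assms])
  finally show ?thesis .
qed

lemma msum_carrier: "msum r c F J \<in> carrier_mat r c"
  unfolding msum_def by simp

lemma mtrace_Lam:
  assumes \<Delta>: "\<Delta> \<in> carrier_mat (n * d) (n * d)" "\<Delta>\<^sup>T = \<Delta>"
    and S: "S \<in> carrier_mat (n * d) p" and "i < n"
  shows "mtrace (Lam n d \<Delta> S i)
    = (\<Sum>j<n. finner (Ablk d \<Delta> i j) (rblock d S i * (rblock d S j)\<^sup>T))"
proof -
  define G where "G j = rblock d S i * (rblock d S j)\<^sup>T" for j
  define T where "T j = G j * Ablk d \<Delta> j i + Ablk d \<Delta> i j * rblock d S j * (rblock d S i)\<^sup>T" for j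
  have Sj: "rblock d S j \<in> carrier_mat d p" for j
    using S by (rule rblock_carrier)
  have G: "G j \<in> carrier_mat d d" for j
    unfolding G_def by (rule mult_transpose_carrier[OF Sj Sj])
  have AG: "G j * Ablk d \<Delta> j i \<in> carrier_mat d d"
    and AS: "Ablk d \<Delta> i j * rblock d S j * (rblock d S i)\<^sup>T \<in> carrier_mat d d" for j
    using G Sj Ablk_carrier by (meson mult_carrier_mat transpose_carrier_mat)+
  have "mtrace (T j) = 2 * finner (Ablk d \<Delta> i j) (G j)" if "j < n" for j
  proof -
    have "mtrace (G j * Ablk d \<Delta> j i) = finner (G j) (Ablk d \<Delta> i j)"
      using Ablk_transpose[OF \<Delta> \<open>i < n\<close> \<open>j < n\<close>] by (metis finner_def transpose_transpose)
    also have "\<dots> = finner (Ablk d \<Delta> i j) (G j)"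
      using G Ablk_carrier by (rule finner_comm)
    finally have 1: "mtrace (G j * Ablk d \<Delta> j i) = finner (Ablk d \<Delta> i j) (G j)" .
    have "Ablk d \<Delta> i j * rblock d S j * (rblock d S i)\<^sup>T = Ablk d \<Delta> i j * (G j)\<^sup>T"
      unfolding G_def using Sj[of i] Sj[of j] Ablk_carrier
      by (simp add: transpose_mult[of _ d p] assoc_mult_mat[of _ d d _ p _ d])
    then have 2: "mtrace (Ablk d \<Delta> i j * rblock d S j * (rblock d S i)\<^sup>T)
        = finner (Ablk d \<Delta> i j) (G j)"
      by (simp add: finner_def)
    show ?thesis
      unfolding T_def mtrace_add[OF AG AS] 1 2 by simp
  qed
  moreover have "Lam n d \<Delta> S i = (1 / 2) \<cdot>\<^sub>m msum d d T {..<n}"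
    unfolding Lam_def T_def G_def ..
  moreover have "T j \<in> carrier_mat d d" for j
    unfolding T_def using AG AS by simp
  ultimately show ?thesis
    by (simp add: mtrace_smult[OF msum_carrier] mtrace_msum G_def sum_distrib_left)
qed

lemma mtrace_Ablk: "mtrace (Ablk d \<Delta> i j) = real d + mtrace (dblock d \<Delta> i j)"
  unfolding Ablk_def by (simp add: mtrace_add[OF one_carrier_mat dblock_carrier] mtrace_one)

lemma finner_Ablk:
  "G \<in> carrier_mat d d \<Longrightarrow> finner (Ablk d \<Delta> i j) G = mtrace G + finner (dblock d \<Delta> i j) G"
  unfolding Ablk_def
  by (simp add: finner_add_left[OF one_carrier_mat dblock_carrier] finner_one_left)

lemma fnorm2_one: "fnorm2 (1\<^sub>m d) = real d"
  by (simp add: fnorm2_def finner_one_left mtrace_one)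

lemma second_order_block_inequality:
  assumes \<Delta>: "\<Delta> \<in> carrier_mat (n * d) (n * d)" "\<Delta>\<^sup>T = \<Delta>"
    and S: "S \<in> carrier_mat (n * d) p"
    and orth: "\<forall>i<n. rblock d S i * (rblock d S i)\<^sup>T = 1\<^sub>m d"
    and crit: "second_order_critical n d p \<Delta> S"
  shows "(\<Sum>i<n. \<Sum>j<n. (real d + mtrace (dblock d \<Delta> i j))
              * (real p - 2 * real d + fnorm2 (rblock d S i * (rblock d S j)\<^sup>T)))
       \<le> (real p - real d) * (\<Sum>i<n. \<Sum>j<n. mtrace (rblock d S i * (rblock d S j)\<^sup>T)
              + finner (dblock d \<Delta> i j) (rblock d S i * (rblock d S j)\<^sup>T))"
proof -
  define G where "G i j = rblock d S i * (rblock d S j)\<^sup>T" for i j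
  have Si: "rblock d S i \<in> carrier_mat d p" for i
    using S by (rule rblock_carrier)
  have G: "G i j \<in> carrier_mat d d" for i j
    unfolding G_def by (rule mult_transpose_carrier[OF Si Si])
  have proj: "finner (ker_proj (rblock d S i)) (ker_proj (rblock d S j))
      = real p - 2 * real d + fnorm2 (G i j)" if "i < n" "j < n" for i j
    unfolding G_def using Si orth that by (simp add: finner_ker_proj)
  have proj_diag: "finner (ker_proj (rblock d S i)) (ker_proj (rblock d S i)) = real p - real d"
    if "i < n" for i
    using proj[OF that that] orth that by (simp add: G_def fnorm2_one)
  have Lam: "mtrace (Lam n d \<Delta> S i) = (\<Sum>j<n. mtrace (G i j) + finner (dblock d \<Delta> i j) (G i j))"
    if "i < n" for i
    using mtrace_Lam[OF \<Delta> S that] G by (simp add: G_def finner_Ablk)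
  have "(\<Sum>i<n. \<Sum>j<n. (real d + mtrace (dblock d \<Delta> i j)) * (real p - 2 * real d + fnorm2 (G i j)))
      = (\<Sum>i<n. \<Sum>j<n. mtrace (Ablk d \<Delta> i j)
          * finner (ker_proj (rblock d S i)) (ker_proj (rblock d S j)))"
    by (intro sum.cong refl) (simp add: proj mtrace_Ablk)
  also have "\<dots> \<le> (\<Sum>i<n. mtrace (Lam n d \<Delta> S i)
          * finner (ker_proj (rblock d S i)) (ker_proj (rblock d S i)))"
    using S orth crit by (rule second_order_trace_inequality)
  also have "\<dots> = (\<Sum>i<n. (real p - real d) * (\<Sum>j<n. mtrace (G i j) + finner (dblock d \<Delta> i j) (G i j)))"
    by (intro sum.cong refl) (simp add: Lam proj_diag)
  finally show ?thesis
    unfolding G_def by (simp add: sum_distrib_left)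
qed

lemma Zmat_carrier: "Zmat n d \<in> carrier_mat (n * d) d"
  unfolding Zmat_def by simp

lemma dblock_mult_transpose_Zmat:
  "i < n \<Longrightarrow> j < n \<Longrightarrow> dblock d (Zmat n d * (Zmat n d)\<^sup>T) i j = 1\<^sub>m d"
  by (simp add: dblock_mult_transpose[OF Zmat_carrier Zmat_carrier] rblock_Zmat)

lemma fnorm2_Zmat_transpose_mult_blocks:
  assumes S: "S \<in> carrier_mat (n * d) p"
  shows "fnorm2 ((Zmat n d)\<^sup>T * S) = (\<Sum>i<n. \<Sum>j<n. mtrace (rblock d S i * (rblock d S j)\<^sup>T))"
proof -
  have "fnorm2 ((Zmat n d)\<^sup>T * S) = finner (Zmat n d * (Zmat n d)\<^sup>T) (S * S\<^sup>T)"
    using finner_gram[OF Zmat_carrier S] ..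
  also have "\<dots> = (\<Sum>i<n. \<Sum>j<n. finner (1\<^sub>m d) (rblock d S i * (rblock d S j)\<^sup>T))"
    unfolding finner_dblock_sum[OF mult_transpose_carrier[OF Zmat_carrier Zmat_carrier]
        mult_transpose_carrier[OF S S]]
    by (intro sum.cong refl) (simp add: dblock_mult_transpose[OF S S] dblock_mult_transpose_Zmat)
  finally show ?thesis
    using mult_transpose_carrier[OF rblock_carrier[OF S] rblock_carrier[OF S]]
    by (simp add: finner_one_left)
qed

lemma fnorm2_mult_transpose_blocks:
  assumes S: "S \<in> carrier_mat (n * d) p"
  shows "fnorm2 (S * S\<^sup>T) = (\<Sum>i<n. \<Sum>j<n. fnorm2 (rblock d S i * (rblock d S j)\<^sup>T))"
  unfolding fnorm2_def
    finner_dblock_sum[OF mult_transpose_carrier[OF S S] mult_transpose_carrier[OF S S]]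
  by (intro sum.cong refl) (simp add: dblock_mult_transpose[OF S S])

lemma finner_Zmat_gram_minus_blocks:
  assumes \<Delta>: "\<Delta> \<in> carrier_mat (n * d) (n * d)" and S: "S \<in> carrier_mat (n * d) p"
  shows "finner \<Delta> (Zmat n d * (Zmat n d)\<^sup>T - S * S\<^sup>T)
    = (\<Sum>i<n. \<Sum>j<n. mtrace (dblock d \<Delta> i j)
        - finner (dblock d \<Delta> i j) (rblock d S i * (rblock d S j)\<^sup>T))"
proof -
  have ZZ: "Zmat n d * (Zmat n d)\<^sup>T \<in> carrier_mat (n * d) (n * d)"
    and SS: "S * S\<^sup>T \<in> carrier_mat (n * d) (n * d)"
    using S Zmat_carrier by (auto intro: mult_transpose_carrier)
  have G: "rblock d S i * (rblock d S j)\<^sup>T \<in> carrier_mat d d" for i j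
    using S by (intro mult_transpose_carrier rblock_carrier)
  show ?thesis
    unfolding finner_dblock_sum[OF \<Delta> minus_carrier_mat[OF SS]]
  proof (intro sum.cong refl)
    fix i j assume "i \<in> {..<n}" "j \<in> {..<n}"
    then show "finner (dblock d \<Delta> i j) (dblock d (Zmat n d * (Zmat n d)\<^sup>T - S * S\<^sup>T) i j)
        = mtrace (dblock d \<Delta> i j) - finner (dblock d \<Delta> i j) (rblock d S i * (rblock d S j)\<^sup>T)"
      using ZZ SS G dblock_carrier
      by (simp add: dblock_minus dblock_mult_transpose[OF S S] dblock_mult_transpose_Zmat
          finner_minus_right[of _ d d] finner_comm[of _ d d] finner_one_left)
  qed
qed

theorem lemma6:
  fixes n d p :: nat and \<Delta> S :: "real mat"
  assumes "n \<ge> 1" and "d \<ge> 1" and "p > d"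
    and "\<Delta> \<in> carrier_mat (n * d) (n * d)" and "\<Delta>\<^sup>T = \<Delta>"
    and "\<forall>i<n. dblock d \<Delta> i i = 0\<^sub>m d d"
    and "S \<in> carrier_mat (n * d) p"
    and "\<forall>i<n. rblock d S i * (rblock d S i)\<^sup>T = 1\<^sub>m d"
    and "second_order_critical n d p \<Delta> S"
  shows "real (p - d) * fnorm2 ((Zmat n d)\<^sup>T * S)
     \<ge> (real p - 2 * real d) * real n ^ 2 * real d
       + fnorm2 (S * S\<^sup>T) * real d
       + (\<Sum>i<n. \<Sum>j<n. (fnorm2 (rblock d S i * (rblock d S j)\<^sup>T) - real d)
                          * mtrace (dblock d \<Delta> i j))
       + real (p - d) * finner \<Delta> (Zmat n d * (Zmat n d)\<^sup>T - S * S\<^sup>T)"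
proof -
  define g where "g i j = mtrace (rblock d S i * (rblock d S j)\<^sup>T)" for i j
  define e where "e i j = finner (dblock d \<Delta> i j) (rblock d S i * (rblock d S j)\<^sup>T)" for i j
  define t where "t i j = mtrace (dblock d \<Delta> i j)" for i j
  define N where "N i j = fnorm2 (rblock d S i * (rblock d S j)\<^sup>T)" for i j
  have block_ineq: "(\<Sum>i<n. \<Sum>j<n. (real d + t i j) * (real p - 2 * real d + N i j))
      \<le> (real p - real d) * (\<Sum>i<n. \<Sum>j<n. g i j + e i j)"
    unfolding g_def e_def t_def N_def using assms(4,5,7,8,9)
    by (rule second_order_block_inequality)
  have "(real p - 2 * real d) * real n ^ 2 * real d + (\<Sum>i<n. \<Sum>j<n. N i j) * real d
      + (\<Sum>i<n. \<Sum>j<n. (N i j - real d) * t i j)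
      + (real p - real d) * (\<Sum>i<n. \<Sum>j<n. t i j - e i j)
      = (\<Sum>i<n. \<Sum>j<n. (real d + t i j) * (real p - 2 * real d + N i j)
          - (real p - real d) * e i j)"
    by (simp add: sum.distrib sum_subtractf sum_distrib_left sum_distrib_right algebra_simps
        power2_eq_square)
  also have "\<dots> \<le> (real p - real d) * (\<Sum>i<n. \<Sum>j<n. g i j)"
    using block_ineq by (simp add: sum.distrib sum_subtractf sum_distrib_left algebra_simps)
  finally show ?thesis
    using assms(3)
    unfolding fnorm2_Zmat_transpose_mult_blocks[OF assms(7)] fnorm2_mult_transpose_blocks[OF assms(7)]
      finner_Zmat_gram_minus_blocks[OF assms(4,7)]
      g_def[symmetric] e_def[symmetric] t_def[symmetric] N_def[symmetric]
    by (simp add: of_nat_diff)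
qed

end
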